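(* Let $\mathfrak{X}$ be a Bourgain–Delbaen space determined by $(\Gamma_q,i_q)_q$ and let $\Gamma'$ be a self-determined subset of $\Gamma$. Write $\{q:\Gamma'\cap\Delta_q\neq\varnothing\}=\{q_0<q_1<q_2<\cdots\}$, $\Gamma'_{q}=\Gamma'\cap\Gamma_q$, let $R:\ell_\infty(\Gamma)\to\ell_\infty(\Gamma')$ be restriction onto $\Gamma'$, $r'_{q_s}:\ell_\infty(\Gamma_{q_s})\to\ell_\infty(\Gamma'_{q_s})$ the restriction onto $\Gamma'_{q_s}$, and $i'_{q_s}:\ell_\infty(\Gamma'_{q_s})\to\ell_\infty(\Gamma')$, $i'_{q_s}(x)=R(i_{q_s}(x))$, where $x$ is identified with a vector of $\ell_\infty(\Gamma_{q_s})$ vanishing off $\Gamma'_{q_s}$. Then for every $s$ and every $x\in\ell_\infty(\Gamma_{q_s})$, $R(i_{q_s}(x))=i'_{q_s}(r'_{q_s}(x))$.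
   Context: Bourgain–Delbaen spaces: $(\Gamma_q)_{q\geqslant1}$ is a strictly increasing sequence of non-empty finite sets, $\Gamma=\bigcup_q\Gamma_q$, and $i_q:\ell_\infty(\Gamma_q)\to\ell_\infty(\Gamma)$ are linear extension operators ($i_q(x)|_{\Gamma_q}=x$) with $\sup_q\|i_q\|<\infty$, which are compatible: for $p<q$, $i_p=i_q\circ r_q\circ i_p$, with $r_q$ restriction to $\Gamma_q$. Set $\Delta_1=\Gamma_1$, $\Delta_{q+1}=\Gamma_{q+1}\setminus\Gamma_q$, and for $\gamma\in\Delta_q$ let $d_\gamma=i_q(e_\gamma)$; $\mathfrak{X}$ is the closed span of $\{d_\gamma\}$ in $\ell_\infty(\Gamma)$. For $\gamma\in\Gamma$, $e_\gamma^*$ is evaluation at $\gamma$ restricted to $\mathfrak{X}$ and $(d_\gamma^* )$ are the functionals biorthogonal to $(d_\gamma)$. An infinite subset $\Gamma'\subseteq\Gamma$ is self-determined if each $d_\gamma^*$, $\gamma\in\Gamma'$, lies in the linear span of $\{e_\eta^*:\eta\in\Gamma'\}$. *)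

theory Defs
  imports "HOL-Analysis.Analysis" "HOL-Library.Infinite_Set"
begin

definition linf :: "'a set \<Rightarrow> ('a \<Rightarrow> real) set" where
  "linf S = {x. (\<forall>g. g \<notin> S \<longrightarrow> x g = 0) \<and> bounded (range x)}"

definition supnorm :: "('a \<Rightarrow> real) \<Rightarrow> real" where
  "supnorm x = (SUP g. \<bar>x g\<bar>)"

definition restr :: "'a set \<Rightarrow> ('a \<Rightarrow> real) \<Rightarrow> ('a \<Rightarrow> real)" where
  "restr S x = (\<lambda>g. if g \<in> S then x g else 0)"

definition GammaU :: "(nat \<Rightarrow> 'a set) \<Rightarrow> 'a set" where
  "GammaU Gam = (\<Union>q\<in>{1..}. Gam q)"

definition BD_data :: "(nat \<Rightarrow> 'a set) \<Rightarrow> (nat \<Rightarrow> ('a \<Rightarrow> real) \<Rightarrow> ('a \<Rightarrow> real)) \<Rightarrow> bool" where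
  "BD_data Gam i \<longleftrightarrow>
     (\<forall>q\<ge>1. finite (Gam q) \<and> Gam q \<noteq> {} \<and> Gam q \<subset> Gam (Suc q)) \<and>
     (\<forall>q\<ge>1. \<forall>x\<in>linf (Gam q). i q x \<in> linf (GammaU Gam)) \<and>
     (\<forall>q\<ge>1. \<forall>x\<in>linf (Gam q). \<forall>y\<in>linf (Gam q). \<forall>a b::real.
         i q (\<lambda>g. a * x g + b * y g) = (\<lambda>g. a * i q x g + b * i q y g)) \<and>
     (\<forall>q\<ge>1. \<forall>x\<in>linf (Gam q). \<forall>g\<in>Gam q. i q x g = x g) \<and>
     (\<exists>C. \<forall>q\<ge>1. \<forall>x\<in>linf (Gam q). supnorm (i q x) \<le> C * supnorm x) \<and>
     (\<forall>p q. 1 \<le> p \<longrightarrow> p < q \<longrightarrow> (\<forall>x\<in>linf (Gam p). i p x = i q (restr (Gam q) (i p x))))"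

definition Delta :: "(nat \<Rightarrow> 'a set) \<Rightarrow> nat \<Rightarrow> 'a set" where
  "Delta Gam q = (if q = 1 then Gam 1 else if q \<ge> 2 then Gam q - Gam (q - 1) else {})"

definition unitv :: "'a \<Rightarrow> ('a \<Rightarrow> real)" where
  "unitv g = (\<lambda>h. if h = g then 1 else 0)"

definition dvec :: "(nat \<Rightarrow> 'a set) \<Rightarrow> (nat \<Rightarrow> ('a \<Rightarrow> real) \<Rightarrow> ('a \<Rightarrow> real)) \<Rightarrow> 'a \<Rightarrow> ('a \<Rightarrow> real)" where
  "dvec Gam i g = i (THE q. q \<ge> 1 \<and> g \<in> Delta Gam q) (unitv g)"

definition BDspace :: "(nat \<Rightarrow> 'a set) \<Rightarrow> (nat \<Rightarrow> ('a \<Rightarrow> real) \<Rightarrow> ('a \<Rightarrow> real)) \<Rightarrow> ('a \<Rightarrow> real) set" where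
  "BDspace Gam i = {x \<in> linf (GammaU Gam). \<forall>e>0. \<exists>F c. finite F \<and> F \<subseteq> GammaU Gam \<and>
       supnorm (\<lambda>h. x h - (\<Sum>g\<in>F. c g * dvec Gam i g h)) \<le> e}"

definition is_dstar :: "(nat \<Rightarrow> 'a set) \<Rightarrow> (nat \<Rightarrow> ('a \<Rightarrow> real) \<Rightarrow> ('a \<Rightarrow> real)) \<Rightarrow> 'a \<Rightarrow> (('a \<Rightarrow> real) \<Rightarrow> real) \<Rightarrow> bool" where
  "is_dstar Gam i g f \<longleftrightarrow>
     (\<forall>x\<in>BDspace Gam i. \<forall>y\<in>BDspace Gam i. \<forall>a b::real.
         f (\<lambda>h. a * x h + b * y h) = a * f x + b * f y) \<and>
     (\<exists>K. \<forall>x\<in>BDspace Gam i. \<bar>f x\<bar> \<le> K * supnorm x) \<and>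
     (\<forall>h\<in>GammaU Gam. f (dvec Gam i h) = (if h = g then 1 else 0))"

definition self_determined :: "(nat \<Rightarrow> 'a set) \<Rightarrow> (nat \<Rightarrow> ('a \<Rightarrow> real) \<Rightarrow> ('a \<Rightarrow> real)) \<Rightarrow> 'a set \<Rightarrow> bool" where
  "self_determined Gam i G' \<longleftrightarrow> G' \<subseteq> GammaU Gam \<and> infinite G' \<and>
     (\<forall>g\<in>G'. \<exists>f. is_dstar Gam i g f \<and>
        (\<exists>F c. finite F \<and> F \<subseteq> G' \<and> (\<forall>x\<in>BDspace Gam i. f x = (\<Sum>h\<in>F. c h * x h))))"

end

theory Submission
  imports Defs
begin

text \<open>Split \<open>x = r'(x) + z\<close> with \<open>z\<close> vanishing on \<open>\<Gamma>'\<close>; it suffices that \<open>i\<^sub>q z\<close>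
  vanishes on \<open>\<Gamma>'\<close>, which is shown level by level. For \<open>\<gamma> \<in> \<Gamma>' \<inter> \<Delta>\<^sub>P\<^sub>+\<^sub>1\<close>,
  compatibility gives \<open>i\<^sub>q z(\<gamma>) = \<Sum>\<^sub>\<zeta>\<^sub>\<in>\<^sub>\<Gamma>\<^sub>P i\<^sub>q z(\<zeta>) i\<^sub>P(e\<^sub>\<zeta>)(\<gamma>)\<close>. The terms with
  \<open>\<zeta> \<in> \<Gamma>'\<close> vanish by induction, the others because \<open>i\<^sub>P(e\<^sub>\<zeta>)(\<gamma>) = 0\<close> for
  \<open>\<zeta> \<notin> \<Gamma>'\<close>: evaluate \<open>d\<^sup>*\<^sub>\<gamma> = e\<^sup>*\<^sub>\<gamma> - e\<^sup>*\<^sub>\<gamma> \<circ> i\<^sub>P \<circ> r\<^sub>P\<close> on \<open>i\<^sub>N(e\<^sub>\<zeta>)\<close>, a finite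
  combination of the \<open>d\<^sub>\<eta>\<close>, and compare with the representation of \<open>d\<^sup>*\<^sub>\<gamma>\<close> by
  evaluations at points of \<open>\<Gamma>'\<close>.\<close>

lemma linf_lincomb:
  assumes "x \<in> linf S" "y \<in> linf S"
  shows "(\<lambda>g. a * x g + b * y g) \<in> linf S"
proof -
  from assms obtain B1 B2 where B1: "\<forall>g. \<bar>x g\<bar> \<le> B1" and B2: "\<forall>g. \<bar>y g\<bar> \<le> B2"
    unfolding linf_def bounded_iff by auto
  have "\<bar>a * x g + b * y g\<bar> \<le> \<bar>a\<bar> * B1 + \<bar>b\<bar> * B2" for g
  proof -
    have "\<bar>a * x g + b * y g\<bar> \<le> \<bar>a\<bar> * \<bar>x g\<bar> + \<bar>b\<bar> * \<bar>y g\<bar>"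
      by (metis abs_mult abs_triangle_ineq)
    also have "\<dots> \<le> \<bar>a\<bar> * B1 + \<bar>b\<bar> * B2"
      using B1 B2 by (intro add_mono mult_left_mono) auto
    finally show ?thesis .
  qed
  then show ?thesis using assms unfolding linf_def bounded_iff by auto
qed

lemma linf_zero: "(\<lambda>g. 0) \<in> linf S"
  unfolding linf_def by auto

lemma linf_mono: "A \<subseteq> B \<Longrightarrow> x \<in> linf A \<Longrightarrow> x \<in> linf B"
  unfolding linf_def by auto

lemma linf_restr_finite:
  assumes "finite T"
  shows "restr T x \<in> linf T"
proof -
  have "range (restr T x) \<subseteq> insert 0 (x ` T)" unfolding restr_def by auto
  moreover have "bounded (insert 0 (x ` T))" using assms by (intro finite_imp_bounded) auto
  ultimately show ?thesis unfolding linf_def restr_def by (auto intro: bounded_subset)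
qed

lemma linf_unitv:
  assumes "g \<in> S"
  shows "unitv g \<in> linf S"
proof -
  have "range (unitv g) \<subseteq> {0, 1}" unfolding unitv_def by auto
  then have "bounded (range (unitv g))" by (rule bounded_subset[OF finite_imp_bounded, rotated]) simp
  then show ?thesis using assms unfolding linf_def unitv_def by auto
qed

lemma sum_unitv_eq:
  assumes "finite S" "\<forall>g. g \<notin> S \<longrightarrow> u g = 0"
  shows "u = (\<lambda>g. \<Sum>\<eta>\<in>S. u \<eta> * unitv \<eta> g)"
proof
  fix g
  have "(\<Sum>\<eta>\<in>S. u \<eta> * unitv \<eta> g) = (\<Sum>\<eta>\<in>S. if g = \<eta> then u \<eta> else 0)"
    unfolding unitv_def by (intro sum.cong) auto
  then show "u g = (\<Sum>\<eta>\<in>S. u \<eta> * unitv \<eta> g)" using assms by auto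
qed

lemma lincomb_sum_closed:
  fixes V :: "('a \<Rightarrow> real) set" and v :: "'b \<Rightarrow> 'a \<Rightarrow> real"
  assumes cl: "\<And>x y a b. x \<in> V \<Longrightarrow> y \<in> V \<Longrightarrow> (\<lambda>g. a * x g + b * y g) \<in> V"
    and zero: "(\<lambda>g. 0) \<in> V" and "finite S" and "\<And>s. s \<in> S \<Longrightarrow> v s \<in> V"
  shows "(\<lambda>g. \<Sum>s\<in>S. c s * v s g) \<in> V"
  using \<open>finite S\<close> \<open>\<And>s. s \<in> S \<Longrightarrow> v s \<in> V\<close>
proof (induction S rule: finite_induct)
  case empty then show ?case using zero by simp
next
  case (insert s S)
  then have "(\<lambda>g. c s * v s g + 1 * (\<Sum>s\<in>S. c s * v s g)) \<in> V"
    by (intro cl) auto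
  then show ?case using insert by simp
qed

lemma linear_on_sum:
  fixes V :: "('a \<Rightarrow> real) set" and v :: "'b \<Rightarrow> 'a \<Rightarrow> real" and L :: "('a \<Rightarrow> real) \<Rightarrow> real"
  assumes lin: "\<And>x y a b. x \<in> V \<Longrightarrow> y \<in> V \<Longrightarrow> L (\<lambda>g. a * x g + b * y g) = a * L x + b * L y"
    and cl: "\<And>x y a b. x \<in> V \<Longrightarrow> y \<in> V \<Longrightarrow> (\<lambda>g. a * x g + b * y g) \<in> V"
    and zero: "(\<lambda>g. 0) \<in> V" and "finite S" and "\<And>s. s \<in> S \<Longrightarrow> v s \<in> V"
  shows "L (\<lambda>g. \<Sum>s\<in>S. c s * v s g) = (\<Sum>s\<in>S. c s * L (v s))"
  using \<open>finite S\<close> \<open>\<And>s. s \<in> S \<Longrightarrow> v s \<in> V\<close>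
proof (induction S rule: finite_induct)
  case empty
  have "L (\<lambda>g. 0) = 0 * L (\<lambda>g. 0) + 0 * L (\<lambda>g. 0)"
    using lin[OF zero zero, of 0 0] by simp
  then show ?case by simp
next
  case (insert s S)
  have "(\<lambda>g. \<Sum>s\<in>S. c s * v s g) \<in> V" using lincomb_sum_closed[OF cl zero] insert by blast
  then have "L (\<lambda>g. c s * v s g + 1 * (\<Sum>s\<in>S. c s * v s g)) =
        c s * L (v s) + 1 * L (\<lambda>g. \<Sum>s\<in>S. c s * v s g)"
    using lin insert by blast
  then show ?case using insert by simp
qed

locale BD_system =
  fixes Gam :: "nat \<Rightarrow> 'a set" and i :: "nat \<Rightarrow> ('a \<Rightarrow> real) \<Rightarrow> ('a \<Rightarrow> real)"
  assumes BD_data: "BD_data Gam i"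
begin

lemma BD_data_parts:
  "\<forall>q\<ge>1. finite (Gam q) \<and> Gam q \<noteq> {} \<and> Gam q \<subset> Gam (Suc q)"
  "\<forall>q\<ge>1. \<forall>x\<in>linf (Gam q). i q x \<in> linf (GammaU Gam)"
  "\<forall>q\<ge>1. \<forall>x\<in>linf (Gam q). \<forall>y\<in>linf (Gam q). \<forall>a b::real.
     i q (\<lambda>g. a * x g + b * y g) = (\<lambda>g. a * i q x g + b * i q y g)"
  "\<forall>q\<ge>1. \<forall>x\<in>linf (Gam q). \<forall>g\<in>Gam q. i q x g = x g"
  "\<forall>p q. 1 \<le> p \<longrightarrow> p < q \<longrightarrow> (\<forall>x\<in>linf (Gam p). i p x = i q (restr (Gam q) (i p x)))"
  using BD_data unfolding BD_data_def by auto

lemma finite_Gam: "q \<ge> 1 \<Longrightarrow> finite (Gam q)"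
  using BD_data_parts(1) by simp

lemma Gam_psubset_Suc: "q \<ge> 1 \<Longrightarrow> Gam q \<subset> Gam (Suc q)"
  using BD_data_parts(1) by simp

lemma i_in_linf: "q \<ge> 1 \<Longrightarrow> x \<in> linf (Gam q) \<Longrightarrow> i q x \<in> linf (GammaU Gam)"
  using BD_data_parts(2) by simp

lemma i_lincomb: "q \<ge> 1 \<Longrightarrow> x \<in> linf (Gam q) \<Longrightarrow> y \<in> linf (Gam q) \<Longrightarrow>
    i q (\<lambda>g. a * x g + b * y g) = (\<lambda>g. a * i q x g + b * i q y g)"
  using BD_data_parts(3) by simp

lemma i_extends: "q \<ge> 1 \<Longrightarrow> x \<in> linf (Gam q) \<Longrightarrow> g \<in> Gam q \<Longrightarrow> i q x g = x g"
  using BD_data_parts(4) by simp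

lemma i_compatible: "1 \<le> p \<Longrightarrow> p < q \<Longrightarrow> x \<in> linf (Gam p) \<Longrightarrow> i p x = i q (restr (Gam q) (i p x))"
  using BD_data_parts(5) by simp

lemma Gam_mono:
  assumes "1 \<le> p" "p \<le> q"
  shows "Gam p \<subseteq> Gam q"
  using assms(2)
proof (induction rule: dec_induct)
  case (step n) then show ?case using Gam_psubset_Suc[of n] assms(1) by auto
qed simp

lemma Gam_subset_GammaU: "q \<ge> 1 \<Longrightarrow> Gam q \<subseteq> GammaU Gam"
  unfolding GammaU_def by auto

lemma mem_GammaU_iff: "\<eta> \<in> GammaU Gam \<longleftrightarrow> (\<exists>q\<ge>1. \<eta> \<in> Gam q)"
  unfolding GammaU_def by auto

lemma finite_subset_Gam:
  assumes "finite F" "F \<subseteq> GammaU Gam"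
  shows "\<exists>N\<ge>1. F \<subseteq> Gam N"
  using assms
proof (induction F rule: finite_induct)
  case (insert x F)
  then obtain N where N: "N \<ge> 1" "F \<subseteq> Gam N" by auto
  obtain q where q: "q \<ge> 1" "x \<in> Gam q" using insert mem_GammaU_iff by auto
  have "Gam N \<subseteq> Gam (max N q)" "Gam q \<subseteq> Gam (max N q)" using Gam_mono N q by auto
  then show ?case using N q by (intro exI[of _ "max N q"]) auto
qed auto

lemma Delta_subset: "Delta Gam r \<subseteq> Gam r"
  unfolding Delta_def by auto

lemma Delta_index_ge1: "\<eta> \<in> Delta Gam r \<Longrightarrow> r \<ge> 1"
  unfolding Delta_def by (auto split: if_splits)

lemma Delta_Suc: "q \<ge> 1 \<Longrightarrow> Delta Gam (Suc q) = Gam (Suc q) - Gam q"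
  unfolding Delta_def by auto

lemma Delta_not_in_earlier:
  assumes "\<eta> \<in> Delta Gam r" "1 \<le> k" "k < r"
  shows "\<eta> \<notin> Gam k"
proof -
  have "\<eta> \<notin> Gam (r - 1)" using assms unfolding Delta_def by auto
  moreover have "Gam k \<subseteq> Gam (r - 1)" using Gam_mono assms by auto
  ultimately show ?thesis by auto
qed

lemma Delta_unique:
  assumes "\<eta> \<in> Delta Gam r" "\<eta> \<in> Delta Gam s"
  shows "r = s"
proof (rule linorder_cases)
  assume "r < s"
  then have "\<eta> \<notin> Gam r" using Delta_not_in_earlier[OF assms(2) Delta_index_ge1[OF assms(1)]] by blast
  then show ?thesis using assms(1) Delta_subset by blast
next
  assume "s < r"
  then have "\<eta> \<notin> Gam s" using Delta_not_in_earlier[OF assms(1) Delta_index_ge1[OF assms(2)]] by blast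
  then show ?thesis using assms(2) Delta_subset by blast
qed

lemma ex_Delta:
  assumes "\<eta> \<in> GammaU Gam"
  obtains r where "\<eta> \<in> Delta Gam r"
proof -
  define P where "P q \<longleftrightarrow> q \<ge> 1 \<and> \<eta> \<in> Gam q" for q
  define r where "r = (LEAST q. P q)"
  have "\<exists>q. P q" using assms unfolding P_def mem_GammaU_iff .
  then have r: "r \<ge> 1" "\<eta> \<in> Gam r" using LeastI_ex[of P] unfolding r_def P_def by auto
  have "\<eta> \<notin> Gam (r - 1)" if "r \<ge> 2"
  proof
    assume "\<eta> \<in> Gam (r - 1)"
    then have "P (r - 1)" using that unfolding P_def by simp
    moreover have "r - 1 < r" using that by simp
    ultimately show False using not_less_Least[of "r - 1" P] unfolding r_def by blast
  qed
  then have "\<eta> \<in> Delta Gam r" using r unfolding Delta_def by auto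
  then show thesis by (rule that)
qed

lemma dvec_Delta:
  assumes "\<eta> \<in> Delta Gam r"
  shows "dvec Gam i \<eta> = i r (unitv \<eta>)"
proof -
  have "(THE q. q \<ge> 1 \<and> \<eta> \<in> Delta Gam q) = r"
  proof (rule the_equality)
    show "r \<ge> 1 \<and> \<eta> \<in> Delta Gam r" using assms Delta_index_ge1[OF assms] by simp
  qed (use Delta_unique[OF assms] in blast)
  then show ?thesis unfolding dvec_def by simp
qed

lemma dvec_in_linf:
  assumes "\<eta> \<in> GammaU Gam"
  shows "dvec Gam i \<eta> \<in> linf (GammaU Gam)"
proof -
  obtain r where r: "\<eta> \<in> Delta Gam r" using ex_Delta[OF assms] .
  have "unitv \<eta> \<in> linf (Gam r)" by (rule linf_unitv[OF subsetD[OF Delta_subset r]])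
  then show ?thesis unfolding dvec_Delta[OF r] by (rule i_in_linf[OF Delta_index_ge1[OF r]])
qed

lemma restr_i_lower:
  assumes "1 \<le> p" "p \<le> q" "x \<in> linf (Gam q)"
  shows "restr (Gam p) (i q x) = restr (Gam p) x"
  using i_extends[of q x] Gam_mono[OF assms(1,2)] assms unfolding restr_def by (auto intro!: ext)

lemma restr_i_self: "q \<ge> 1 \<Longrightarrow> x \<in> linf (Gam q) \<Longrightarrow> restr (Gam q) (i q x) = x"
  using restr_i_lower[of q q x] unfolding restr_def linf_def by auto

lemma i_compatible_le:
  assumes "1 \<le> p" "p \<le> q" "x \<in> linf (Gam p)"
  shows "i p x = i q (restr (Gam q) (i p x))"
proof (cases "p = q")
  case True then show ?thesis using restr_i_self assms by simp
next
  case False then show ?thesis using i_compatible assms by simp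
qed

lemma i_zero: "q \<ge> 1 \<Longrightarrow> i q (\<lambda>h. 0) = (\<lambda>h. 0)"
  using i_lincomb[OF _ linf_zero linf_zero, of q 0 0] by simp

lemma i_sum_unitv:
  assumes "q \<ge> 1" "u \<in> linf (Gam q)"
  shows "i q u = (\<lambda>g. \<Sum>\<eta>\<in>Gam q. u \<eta> * i q (unitv \<eta>) g)"
proof
  fix g
  have "u = (\<lambda>h. \<Sum>\<eta>\<in>Gam q. u \<eta> * unitv \<eta> h)"
    using sum_unitv_eq finite_Gam[OF assms(1)] assms(2) unfolding linf_def by blast
  then have "i q u g = i q (\<lambda>h. \<Sum>\<eta>\<in>Gam q. u \<eta> * unitv \<eta> h) g" by simp
  also have "\<dots> = (\<Sum>\<eta>\<in>Gam q. u \<eta> * i q (unitv \<eta>) g)"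
    by (rule linear_on_sum[where V = "linf (Gam q)" and L = "\<lambda>x. i q x g"])
       (use i_lincomb[OF assms(1)] linf_lincomb linf_zero finite_Gam[OF assms(1)] linf_unitv in auto)
  finally show "i q u g = (\<Sum>\<eta>\<in>Gam q. u \<eta> * i q (unitv \<eta>) g)" .
qed

definition dspan :: "nat \<Rightarrow> ('a \<Rightarrow> real) set" where
  "dspan N = {y. \<exists>b. y = (\<lambda>h. \<Sum>\<eta>\<in>Gam N. b \<eta> * dvec Gam i \<eta> h)}"

lemma dspanI: "y = (\<lambda>h. \<Sum>\<eta>\<in>Gam N. b \<eta> * dvec Gam i \<eta> h) \<Longrightarrow> y \<in> dspan N"
  unfolding dspan_def by blast

lemma dspan_lincomb:
  assumes "x \<in> dspan N" "y \<in> dspan N"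
  shows "(\<lambda>g. a * x g + b * y g) \<in> dspan N"
proof -
  obtain b1 b2 where x: "x = (\<lambda>h. \<Sum>\<eta>\<in>Gam N. b1 \<eta> * dvec Gam i \<eta> h)"
    and y: "y = (\<lambda>h. \<Sum>\<eta>\<in>Gam N. b2 \<eta> * dvec Gam i \<eta> h)"
    using assms unfolding dspan_def by auto
  have "(\<lambda>g. a * x g + b * y g) = (\<lambda>h. \<Sum>\<eta>\<in>Gam N. (a * b1 \<eta> + b * b2 \<eta>) * dvec Gam i \<eta> h)"
    unfolding x y by (simp add: sum_distrib_left sum.distrib algebra_simps)
  then show ?thesis by (rule dspanI)
qed

lemma dspan_zero: "(\<lambda>g. 0) \<in> dspan N"
  unfolding dspan_def by (intro CollectI exI[of _ "\<lambda>_. 0"]) simp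

lemma dvec_in_dspan:
  assumes "N \<ge> 1" "\<eta> \<in> Gam N"
  shows "dvec Gam i \<eta> \<in> dspan N"
proof -
  have "(\<Sum>\<zeta>\<in>Gam N. (if \<zeta> = \<eta> then 1 else 0) * dvec Gam i \<zeta> h) =
        (\<Sum>\<zeta>\<in>Gam N. if \<eta> = \<zeta> then dvec Gam i \<zeta> h else 0)" for h
    by (rule sum.cong) auto
  then have "dvec Gam i \<eta> = (\<lambda>h. \<Sum>\<zeta>\<in>Gam N. (if \<zeta> = \<eta> then 1 else 0) * dvec Gam i \<zeta> h)"
    using assms finite_Gam by simp
  then show ?thesis by (rule dspanI)
qed

lemma dspan_mono_Suc:
  assumes "N \<ge> 1"
  shows "dspan N \<subseteq> dspan (Suc N)"
proof
  fix y assume "y \<in> dspan N"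
  then obtain b where y: "y = (\<lambda>h. \<Sum>\<eta>\<in>Gam N. b \<eta> * dvec Gam i \<eta> h)"
    unfolding dspan_def by auto
  have "y = (\<lambda>h. \<Sum>\<eta>\<in>Gam (Suc N). (if \<eta> \<in> Gam N then b \<eta> else 0) * dvec Gam i \<eta> h)"
    unfolding y using Gam_psubset_Suc[OF assms] finite_Gam[of "Suc N"]
    by (intro ext sum.mono_neutral_cong_left) auto
  then show "y \<in> dspan (Suc N)" by (rule dspanI)
qed

lemma dspan_subset_BDspace:
  assumes "N \<ge> 1"
  shows "dspan N \<subseteq> BDspace Gam i"
proof
  fix y assume "y \<in> dspan N"
  then obtain b where y: "y = (\<lambda>h. \<Sum>\<eta>\<in>Gam N. b \<eta> * dvec Gam i \<eta> h)"
    unfolding dspan_def by auto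
  have "y \<in> linf (GammaU Gam)" unfolding y
    by (rule lincomb_sum_closed)
       (use linf_lincomb linf_zero finite_Gam[OF assms] Gam_subset_GammaU[OF assms] dvec_in_linf in auto)
  moreover have "supnorm (\<lambda>h. y h - (\<Sum>\<eta>\<in>Gam N. b \<eta> * dvec Gam i \<eta> h)) \<le> e"
    if "e > 0" for e
    using that unfolding y supnorm_def by simp
  ultimately show "y \<in> BDspace Gam i"
    unfolding BDspace_def using finite_Gam[OF assms] Gam_subset_GammaU[OF assms] by blast
qed

lemma i_in_dspan_if_supported_on_Delta:
  assumes "N \<ge> 1" "u \<in> linf (Gam N)" "\<forall>\<eta>\<in>Gam N - Delta Gam N. u \<eta> = 0"
  shows "i N u \<in> dspan N"
proof -
  have "i N u = (\<lambda>g. \<Sum>\<eta>\<in>Gam N. u \<eta> * i N (unitv \<eta>) g)"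
    by (rule i_sum_unitv[OF assms(1,2)])
  also have "\<dots> = (\<lambda>g. \<Sum>\<eta>\<in>Gam N. u \<eta> * dvec Gam i \<eta> g)"
    using assms(3) dvec_Delta by (intro ext sum.cong) auto
  finally show ?thesis by (rule dspanI)
qed

lemma i_in_dspan: "N \<ge> 1 \<Longrightarrow> u \<in> linf (Gam N) \<Longrightarrow> i N u \<in> dspan N"
proof (induction N arbitrary: u rule: nat_induct_at_least)
  case base
  then show ?case by (intro i_in_dspan_if_supported_on_Delta) (auto simp: Delta_def)
next
  case (Suc q)
  \<comment> \<open>\<open>u = w + z\<close>: \<open>w\<close> comes from level \<open>q\<close>, \<open>z\<close> is supported on \<open>\<Delta>\<^sub>q\<^sub>+\<^sub>1\<close>\<close>
  define v where "v = restr (Gam q) u"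
  define w where "w = restr (Gam (Suc q)) (i q v)"
  define z where "z = (\<lambda>g. 1 * u g + (-1) * w g)"
  have v: "v \<in> linf (Gam q)" unfolding v_def using linf_restr_finite finite_Gam Suc by blast
  have w: "w \<in> linf (Gam (Suc q))" unfolding w_def by (simp add: linf_restr_finite finite_Gam)
  have z: "z \<in> linf (Gam (Suc q))" unfolding z_def using linf_lincomb Suc w by blast
  have "z \<eta> = 0" if "\<eta> \<in> Gam q" for \<eta>
  proof -
    have "w \<eta> = i q v \<eta>" using that Gam_psubset_Suc[OF Suc(1)] unfolding w_def restr_def by auto
    also have "\<dots> = u \<eta>" using i_extends[OF Suc(1) v that] that unfolding v_def restr_def by simp
    finally show ?thesis unfolding z_def by simp
  qed
  then have iz: "i (Suc q) z \<in> dspan (Suc q)"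
    using Suc(1) z by (intro i_in_dspan_if_supported_on_Delta) (auto simp: Delta_Suc)
  have "i (Suc q) w = i q v" unfolding w_def using i_compatible[OF Suc(1) _ v] by simp
  then have iw: "i (Suc q) w \<in> dspan (Suc q)" using Suc.IH[OF v] dspan_mono_Suc[OF Suc(1)] by auto
  have "u = (\<lambda>g. 1 * w g + 1 * z g)" unfolding z_def by simp
  then have "i (Suc q) u = (\<lambda>g. 1 * i (Suc q) w g + 1 * i (Suc q) z g)"
    using i_lincomb[of "Suc q" w z 1 1] w z by simp
  then show ?case using dspan_lincomb[OF iw iz, of 1 1] by simp
qed

text \<open>For \<open>\<gamma> \<in> \<Delta>\<^sub>P\<^sub>+\<^sub>1\<close> this is the usual formula
  \<open>d\<^sup>*\<^sub>\<gamma> = e\<^sup>*\<^sub>\<gamma> - e\<^sup>*\<^sub>\<gamma> \<circ> i\<^sub>P \<circ> r\<^sub>P\<close>, here defined on all of \<open>\<ell>\<^sub>\<infinity>(\<Gamma>)\<close>.\<close>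
definition dual_coord :: "nat \<Rightarrow> 'a \<Rightarrow> ('a \<Rightarrow> real) \<Rightarrow> real" where
  "dual_coord P \<gamma> y = y \<gamma> - i P (restr (Gam P) y) \<gamma>"

lemma dual_coord_lincomb:
  assumes "P \<ge> 1"
  shows "dual_coord P \<gamma> (\<lambda>g. a * x g + b * y g) = a * dual_coord P \<gamma> x + b * dual_coord P \<gamma> y"
proof -
  have "restr (Gam P) (\<lambda>g. a * x g + b * y g) = (\<lambda>g. a * restr (Gam P) x g + b * restr (Gam P) y g)"
    unfolding restr_def by auto
  then have "i P (restr (Gam P) (\<lambda>g. a * x g + b * y g)) =
        (\<lambda>g. a * i P (restr (Gam P) x) g + b * i P (restr (Gam P) y) g)"
    using i_lincomb[OF assms linf_restr_finite linf_restr_finite] finite_Gam[OF assms] by simp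
  then show ?thesis unfolding dual_coord_def by (simp add: algebra_simps)
qed

lemma dual_coord_dvec:
  assumes P: "P \<ge> 1" and \<gamma>: "\<gamma> \<in> Delta Gam (Suc P)" and \<eta>: "\<eta> \<in> GammaU Gam"
  shows "dual_coord P \<gamma> (dvec Gam i \<eta>) = (if \<eta> = \<gamma> then 1 else 0)"
proof -
  obtain r where r: "\<eta> \<in> Delta Gam r" using ex_Delta[OF \<eta>] .
  have r1: "r \<ge> 1" using Delta_index_ge1[OF r] .
  have u: "unitv \<eta> \<in> linf (Gam r)" by (rule linf_unitv[OF subsetD[OF Delta_subset r]])
  have \<gamma>_notin: "\<gamma> \<notin> Gam P" using Delta_not_in_earlier[OF \<gamma> P] by simp
  show ?thesis
  proof (cases "r \<le> P")
    case True
    have "\<eta> \<in> Gam P" using Gam_mono[OF r1 True] Delta_subset r by blast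
    then show ?thesis
      using i_compatible_le[OF r1 True u] \<gamma>_notin unfolding dual_coord_def dvec_Delta[OF r] by auto
  next
    case False
    have "\<eta> \<notin> Gam P" using Delta_not_in_earlier[OF r P] False by simp
    then have "restr (Gam P) (i r (unitv \<eta>)) = (\<lambda>h. 0)"
      using restr_i_lower[OF P _ u] False unfolding restr_def unitv_def by (auto dest: fun_cong)
    moreover have "\<gamma> \<in> Gam r" using Gam_mono[of "Suc P" r] Delta_subset \<gamma> False by auto
    ultimately show ?thesis
      using i_extends[OF r1 u] i_zero[OF P] unfolding dual_coord_def dvec_Delta[OF r] unitv_def by auto
  qed
qed

lemma dstar_eq_dual_coord_on_dspan:
  assumes f: "is_dstar Gam i \<gamma> f" and P: "P \<ge> 1" and \<gamma>: "\<gamma> \<in> Delta Gam (Suc P)"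
    and N: "N \<ge> 1" and w: "w \<in> dspan N"
  shows "f w = dual_coord P \<gamma> w"
proof -
  obtain b where b: "w = (\<lambda>h. \<Sum>\<eta>\<in>Gam N. b \<eta> * dvec Gam i \<eta> h)"
    using w unfolding dspan_def by auto
  have f_lin: "f (\<lambda>g. a * x g + c * y g) = a * f x + c * f y"
    if "x \<in> dspan N" "y \<in> dspan N" for x y a c
    using f that dspan_subset_BDspace[OF N] unfolding is_dstar_def by blast
  have f_dvec: "f (dvec Gam i \<eta>) = dual_coord P \<gamma> (dvec Gam i \<eta>)" if "\<eta> \<in> Gam N" for \<eta>
    using f dual_coord_dvec[OF P \<gamma>] that Gam_subset_GammaU[OF N] unfolding is_dstar_def by auto
  have "f w = (\<Sum>\<eta>\<in>Gam N. b \<eta> * f (dvec Gam i \<eta>))" unfolding b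
    by (rule linear_on_sum[where V = "dspan N"])
       (use f_lin dspan_lincomb dspan_zero finite_Gam[OF N] dvec_in_dspan[OF N] in auto)
  also have "\<dots> = (\<Sum>\<eta>\<in>Gam N. b \<eta> * dual_coord P \<gamma> (dvec Gam i \<eta>))" using f_dvec by simp
  also have "\<dots> = dual_coord P \<gamma> w" unfolding b
    by (rule linear_on_sum[where V = UNIV, symmetric])
       (use dual_coord_lincomb[OF P] finite_Gam[OF N] in auto)
  finally show ?thesis .
qed

lemma i_unitv_vanishes_on_self_determined:
  assumes sd: "self_determined Gam i G'" and P: "P \<ge> 1" and \<gamma>: "\<gamma> \<in> G' \<inter> Delta Gam (Suc P)"
    and \<zeta>: "\<zeta> \<in> Gam P - G'"
  shows "i P (unitv \<zeta>) \<gamma> = 0"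
proof -
  obtain f F c where f: "is_dstar Gam i \<gamma> f" and F: "finite F" "F \<subseteq> G'"
    and f_eval: "\<forall>x\<in>BDspace Gam i. f x = (\<Sum>h\<in>F. c h * x h)"
    using sd \<gamma> unfolding self_determined_def by blast
  have "G' \<subseteq> GammaU Gam" using sd unfolding self_determined_def by blast
  then have "F \<union> Gam (Suc P) \<subseteq> GammaU Gam" using F Gam_subset_GammaU[of "Suc P"] by auto
  moreover have "finite (F \<union> Gam (Suc P))" using F finite_Gam[of "Suc P"] by simp
  ultimately obtain N where N: "N \<ge> 1" "F \<union> Gam (Suc P) \<subseteq> Gam N"
    using finite_subset_Gam by blast
  have \<zeta>N: "\<zeta> \<in> Gam N" using \<zeta> Gam_psubset_Suc[OF P] N by auto
  have u: "unitv \<zeta> \<in> linf (Gam N)" by (rule linf_unitv[OF \<zeta>N])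
  define w where "w = i N (unitv \<zeta>)"
  have w_eq: "w h = unitv \<zeta> h" if "h \<in> Gam N" for h
    unfolding w_def using i_extends[OF N(1) u that] .
  have w: "w \<in> dspan N" unfolding w_def by (rule i_in_dspan[OF N(1) u])
  have "w \<in> BDspace Gam i" using w dspan_subset_BDspace[OF N(1)] by blast
  then have "f w = (\<Sum>h\<in>F. c h * w h)" using f_eval by blast
  also have "\<dots> = (\<Sum>h\<in>F. c h * unitv \<zeta> h)" using w_eq N(2) by (intro sum.cong) auto
  also have "\<dots> = 0" using \<zeta> F(2) unfolding unitv_def by (intro sum.neutral) auto
  finally have "f w = 0" .
  have "restr (Gam P) w = unitv \<zeta>"
  proof
    fix h
    show "restr (Gam P) w h = unitv \<zeta> h"
      using w_eq[of h] \<zeta> Gam_psubset_Suc[OF P] N(2) unfolding restr_def unitv_def by auto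
  qed
  moreover have "w \<gamma> = 0"
    using w_eq[of \<gamma>] \<gamma> \<zeta> N(2) Delta_Suc[OF P] unfolding unitv_def by auto
  ultimately have "dual_coord P \<gamma> w = - i P (unitv \<zeta>) \<gamma>"
    unfolding dual_coord_def by simp
  moreover have "f w = dual_coord P \<gamma> w"
    using dstar_eq_dual_coord_on_dspan[OF f P _ N(1) w] \<gamma> by blast
  ultimately show ?thesis using \<open>f w = 0\<close> by simp
qed

lemma i_restr_vanishes_on_next_level:
  assumes sd: "self_determined Gam i G'" and P: "P \<ge> 1" and \<gamma>: "\<gamma> \<in> G' \<inter> Delta Gam (Suc P)"
    and y: "\<forall>\<zeta>\<in>G' \<inter> Gam P. y \<zeta> = 0"
  shows "i P (restr (Gam P) y) \<gamma> = 0"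
proof -
  have "i P (restr (Gam P) y) \<gamma> = (\<Sum>\<zeta>\<in>Gam P. restr (Gam P) y \<zeta> * i P (unitv \<zeta>) \<gamma>)"
    using i_sum_unitv[OF P linf_restr_finite[OF finite_Gam[OF P]]] by simp
  also have "\<dots> = 0"
    using y i_unitv_vanishes_on_self_determined[OF sd P \<gamma>] unfolding restr_def
    by (intro sum.neutral) auto
  finally show ?thesis .
qed

lemma i_vanishes_on_self_determined:
  assumes sd: "self_determined Gam i G'" and q: "q \<ge> 1" and z: "z \<in> linf (Gam q)"
    and z0: "\<forall>g\<in>G'. z g = 0" and \<gamma>: "\<gamma> \<in> G'"
  shows "i q z \<gamma> = 0"
proof -
  have vanish: "\<forall>\<gamma>\<in>G' \<inter> Gam P. i q z \<gamma> = 0" if "q \<le> P" for P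
    using that
  proof (induction P rule: dec_induct)
    case base
    then show ?case using i_extends[OF q z] z0 by simp
  next
    case (step P)
    have P: "P \<ge> 1" using step.hyps q by simp
    show ?case
    proof
      fix \<gamma> assume \<gamma>: "\<gamma> \<in> G' \<inter> Gam (Suc P)"
      show "i q z \<gamma> = 0"
      proof (cases "\<gamma> \<in> Gam P")
        case True then show ?thesis using step.IH \<gamma> by blast
      next
        case False
        then have "\<gamma> \<in> G' \<inter> Delta Gam (Suc P)" using \<gamma> Delta_Suc[OF P] by auto
        then have "i P (restr (Gam P) (i q z)) \<gamma> = 0"
          using i_restr_vanishes_on_next_level[OF sd P] step.IH by blast
        then show ?thesis using i_compatible_le[OF q step.hyps(1) z] by simp
      qed
    qed
  qed
  have "\<gamma> \<in> GammaU Gam" using \<gamma> sd unfolding self_determined_def by blast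
  then obtain k where "k \<ge> 1" "\<gamma> \<in> Gam k" unfolding mem_GammaU_iff by blast
  then have "\<gamma> \<in> G' \<inter> Gam (max q k)" using Gam_mono[of k "max q k"] \<gamma> by auto
  then show ?thesis using vanish[of "max q k"] by simp
qed

lemma restr_i_self_determined:
  assumes sd: "self_determined Gam i G'" and q: "q \<ge> 1" and x: "x \<in> linf (Gam q)"
  shows "restr G' (i q x) = restr G' (i q (restr (G' \<inter> Gam q) x))"
proof -
  define x' where "x' = restr (G' \<inter> Gam q) x"
  define z where "z = (\<lambda>g. 1 * x g + (-1) * x' g)"
  have x': "x' \<in> linf (Gam q)" unfolding x'_def
    by (rule linf_mono[OF _ linf_restr_finite]) (use finite_Gam[OF q] in auto)
  have z: "z \<in> linf (Gam q)" unfolding z_def using linf_lincomb x x' by blast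
  have "\<forall>g\<in>G'. z g = 0" using x unfolding z_def x'_def restr_def linf_def by auto
  then have "\<forall>\<gamma>\<in>G'. i q z \<gamma> = 0" using i_vanishes_on_self_determined[OF sd q z] by blast
  moreover have "x = (\<lambda>g. 1 * x' g + 1 * z g)" unfolding z_def by simp
  then have "i q x = (\<lambda>g. 1 * i q x' g + 1 * i q z g)" using i_lincomb[OF q x' z, of 1 1] by simp
  ultimately have "restr G' (i q x) = restr G' (i q x')" unfolding restr_def by auto
  then show ?thesis unfolding x'_def .
qed

lemma infinite_levels_meeting:
  assumes "G' \<subseteq> GammaU Gam" "infinite G'"
  shows "infinite {q. q \<ge> 1 \<and> G' \<inter> Delta Gam q \<noteq> {}}" (is "infinite ?S")
proof
  assume "finite ?S"
  moreover have "finite (Delta Gam q)" if "q \<in> ?S" for q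
    using that finite_Gam Delta_subset finite_subset by blast
  ultimately have "finite (\<Union>q\<in>?S. Delta Gam q)" by blast
  moreover have "G' \<subseteq> (\<Union>q\<in>?S. Delta Gam q)"
  proof
    fix \<gamma> assume "\<gamma> \<in> G'"
    then obtain r where "\<gamma> \<in> Delta Gam r" using assms(1) ex_Delta by blast
    then show "\<gamma> \<in> (\<Union>q\<in>?S. Delta Gam q)" using \<open>\<gamma> \<in> G'\<close> Delta_index_ge1 by blast
  qed
  ultimately show False using assms(2) finite_subset by blast
qed

end

text \<open>The enumeration of the levels only serves to guarantee \<open>q \<ge> 1\<close>; it is
  well defined because \<open>\<Gamma>'\<close> is infinite.\<close>
theorem lemma1p8:
  fixes Gam :: "nat \<Rightarrow> 'a set"
    and i :: "nat \<Rightarrow> ('a \<Rightarrow> real) \<Rightarrow> ('a \<Rightarrow> real)"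
    and G' :: "'a set"
  assumes "BD_data Gam i"
    and "self_determined Gam i G'"
  shows "\<forall>s x. let q = Infinite_Set.enumerate {q. q \<ge> 1 \<and> G' \<inter> Delta Gam q \<noteq> {}} s in
           x \<in> linf (Gam q) \<longrightarrow>
           restr G' (i q x) = restr G' (i q (restr (G' \<inter> Gam q) x))"
proof (intro allI)
  fix s x
  interpret BD_system Gam i by (rule BD_system.intro[OF assms(1)])
  let ?S = "{q. q \<ge> 1 \<and> G' \<inter> Delta Gam q \<noteq> {}}"
  have "infinite ?S"
    using infinite_levels_meeting assms(2) unfolding self_determined_def by blast
  then have "Infinite_Set.enumerate ?S s \<ge> 1" using enumerate_in_set by blast
  then show "let q = Infinite_Set.enumerate ?S s in
      x \<in> linf (Gam q) \<longrightarrow> restr G' (i q x) = restr G' (i q (restr (G' \<inter> Gam q) x))"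
    using restr_i_self_determined[OF assms(2)] by simp
qed

end
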